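(* Consider the second-order Kuramoto model with bonding force $$\dot\theta_i=\omega_i,\qquad \dot\omega_i=\frac{1}{N}\sum_{j=1}^N\big[\kappa_0\cos(\theta_j-\theta_i)+\kappa_1\big](\omega_j-\omega_i)+\frac{\kappa_2}{N}\sum_{j=1}^N\big[|\theta_j-\theta_i|-\theta^\infty_{ij}\big]\operatorname{sgn}(\theta_j-\theta_i),\quad i\in[N].$$ Suppose the initial data and parameters satisfy $$(\Theta^0,W^0)\in\mathcal{S},\quad \mathcal{E}(0)<\frac{\kappa_2\big(\min_{i\ne j}\theta^\infty_{ij}\big)^2}{2N},\quad \kappa_0\cos\mathcal{U}+\kappa_1>0,\quad \kappa_2>0,$$ and for $\tau\in(0,\infty]$ let $\{(\theta_i,\omega_i)\}$ be a smooth solution on $[0,\tau)$. Then no collision occurs between any pair of distinct oscillators on $[0,\tau]$: $\theta_i(t)\ne\theta_j(t)$ for all $i\ne j$ and $t\in[0,\tau)$, and no pair collides in the limit $t\to\tau^-$ (i.e. it is not the case that $\theta_i(t)-\theta_j(t)\to0$ as $t\to\tau^-$ for some $i\neq j$).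
   Context: $N\ge2$, $[N]=\{1,\dots,N\}$, $\kappa_0,\kappa_1\ge0$, $\kappa_2>0$; $[\theta^\infty_{ij}]$ real $N\times N$ matrix with $\theta^\infty_{ii}=0$, $\theta^\infty_{ij}=\theta^\infty_{ji}$; $\operatorname{sgn}$ is the sign function; $(\Theta^0,W^0)=(\theta_i(0),\omega_i(0))_{i}$. Energy: $\mathcal{E}:=\frac12\sum_i|\omega_i|^2+\frac{\kappa_2}{4N}\sum_{i,j}(|\theta_j-\theta_i|-\theta^\infty_{ij})^2$. $\mathcal{U}:=\max_{i\ne j}\theta^\infty_{ij}+\sqrt{2N\mathcal{E}(0)/\kappa_2}$, and $\mathcal{S}:=\{(\Theta,W)\in\mathbb{R}^{2N}:|\theta_i-\theta_j|<\mathcal{U}<\pi\ \forall i,j\}$. *)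

theory Defs
  imports "HOL-Analysis.Analysis"
begin

definition kur_energy ::
  "nat \<Rightarrow> real \<Rightarrow> (nat \<Rightarrow> nat \<Rightarrow> real) \<Rightarrow> (nat \<Rightarrow> real) \<Rightarrow> (nat \<Rightarrow> real) \<Rightarrow> real" where
  "kur_energy N k2 thinf Th W =
     (1/2) * (\<Sum>i\<in>{1..N}. (W i)^2)
     + k2 / (4 * real N) * (\<Sum>i\<in>{1..N}. \<Sum>j\<in>{1..N}. (\<bar>Th j - Th i\<bar> - thinf i j)^2)"

definition kur_U ::
  "nat \<Rightarrow> real \<Rightarrow> (nat \<Rightarrow> nat \<Rightarrow> real) \<Rightarrow> real \<Rightarrow> real" where
  "kur_U N k2 thinf E0 =
     Max {thinf i j | i j. i \<in> {1..N} \<and> j \<in> {1..N} \<and> i \<noteq> j} + sqrt (2 * real N * E0 / k2)"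

definition kur_min_thinf :: "nat \<Rightarrow> (nat \<Rightarrow> nat \<Rightarrow> real) \<Rightarrow> real" where
  "kur_min_thinf N thinf = Min {thinf i j | i j. i \<in> {1..N} \<and> j \<in> {1..N} \<and> i \<noteq> j}"

definition kur_S :: "nat \<Rightarrow> real \<Rightarrow> (nat \<Rightarrow> real) \<Rightarrow> bool" where
  "kur_S N U Th \<longleftrightarrow> (\<forall>i\<in>{1..N}. \<forall>j\<in>{1..N}. \<bar>Th i - Th j\<bar> < U) \<and> U < pi"

definition kur_rhs ::
  "nat \<Rightarrow> real \<Rightarrow> real \<Rightarrow> real \<Rightarrow> (nat \<Rightarrow> nat \<Rightarrow> real) \<Rightarrow> (nat \<Rightarrow> real) \<Rightarrow> (nat \<Rightarrow> real) \<Rightarrow> nat \<Rightarrow> real" where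
  "kur_rhs N k0 k1 k2 thinf Th W i =
     (1 / real N) * (\<Sum>j\<in>{1..N}. (k0 * cos (Th j - Th i) + k1) * (W j - W i))
     + k2 / real N * (\<Sum>j\<in>{1..N}. (\<bar>Th j - Th i\<bar> - thinf i j) * sgn (Th j - Th i))"

end

theory Submission
  imports Defs
begin

text \<open>
  Along a solution without collisions the energy dissipates,
  \<open>E' = -(1/2N) \<Sum>\<^sub>i\<^sub>j (\<kappa>\<^sub>0 cos (\<theta>\<^sub>j - \<theta>\<^sub>i) + \<kappa>\<^sub>1) (\<omega>\<^sub>j - \<omega>\<^sub>i)\<^sup>2\<close>:
  the bonding forces are antisymmetric in \<open>i, j\<close>, so their work exactly cancels the change of
  the bonding energy. Conversely, each bonding term of the energy controls its own pair,
  \<open>||\<theta>\<^sub>j - \<theta>\<^sub>i| - \<theta>\<^sup>\<infinity>\<^sub>i\<^sub>j| \<le> r = sqrt (2N E(0) / \<kappa>\<^sub>2)\<close> as long as \<open>E \<le> E(0)\<close>.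
  The smallness of \<open>E(0)\<close> means \<open>r < min \<theta>\<^sup>\<infinity>\<close>, so while \<open>E \<le> E(0)\<close> every gap lies in
  \<open>[min \<theta>\<^sup>\<infinity> - r, U]\<close>: no two oscillators collide and all couplings stay above
  \<open>\<kappa>\<^sub>0 cos U + \<kappa>\<^sub>1 > 0\<close>, which in turn keeps the energy from increasing. A continuity
  argument closes this loop, and the uniform gap \<open>min \<theta>\<^sup>\<infinity> - r > 0\<close> also rules out
  collisions in the limit at the time horizon.
\<close>

lemma has_real_derivative_abs_minus_power2:
  fixes g :: "real \<Rightarrow> real"
  assumes g: "(g has_real_derivative g') (at t within S)" and nz: "g t \<noteq> 0"
  shows "((\<lambda>t. (\<bar>g t\<bar> - c)\<^sup>2) has_real_derivative 2 * (\<bar>g t\<bar> - c) * sgn (g t) * g')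
           (at t within S)"
proof -
  have pos: "0 < (g t)\<^sup>2"
    using nz by simp
  have "((\<lambda>t. sqrt ((g t)\<^sup>2)) has_real_derivative inverse (sqrt ((g t)\<^sup>2)) / 2 * (2 * g t * g'))
          (at t within S)"
    using DERIV_chain2[OF DERIV_real_sqrt[OF pos] DERIV_power[OF g, of 2]] by (simp add: mult_ac)
  from DERIV_power[OF DERIV_diff[OF this DERIV_const[of c]], of 2]
  have "((\<lambda>t. (\<bar>g t\<bar> - c)\<^sup>2) has_real_derivative
          2 * (\<bar>g t\<bar> - c) * (inverse \<bar>g t\<bar> / 2 * (2 * g t * g'))) (at t within S)"
    by (simp add: algebra_simps)
  then show ?thesis
    by (rule DERIV_cong) (use nz in \<open>simp add: sgn_if field_simps\<close>)
qed

lemma sum_sum_symmetric_weighted_diff: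
  fixes a :: "'i \<Rightarrow> 'i \<Rightarrow> real"
  assumes "\<And>i j. i \<in> I \<Longrightarrow> j \<in> I \<Longrightarrow> a i j = a j i"
  shows "(\<Sum>i\<in>I. \<Sum>j\<in>I. a i j * (w j - w i) * w i)
           = - (\<Sum>i\<in>I. \<Sum>j\<in>I. a i j * (w j - w i)\<^sup>2) / 2"
proof -
  have swap: "(\<Sum>i\<in>I. \<Sum>j\<in>I. a i j * (w j - w i) * w i)
                = (\<Sum>i\<in>I. \<Sum>j\<in>I. a i j * (w i - w j) * w j)"
    using assms by (subst sum.swap) (intro sum.cong refl, auto)
  have "(\<Sum>i\<in>I. \<Sum>j\<in>I. a i j * (w j - w i) * w i) + (\<Sum>i\<in>I. \<Sum>j\<in>I. a i j * (w i - w j) * w j)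
      = (\<Sum>i\<in>I. \<Sum>j\<in>I. - (a i j * (w j - w i)\<^sup>2))"
    unfolding sum.distrib[symmetric]
    by (intro sum.cong refl) (simp add: power2_eq_square algebra_simps)
  with swap show ?thesis
    by (simp add: sum_negf)
qed

lemma sum_sum_antisymmetric_weighted_diff:
  fixes b :: "'i \<Rightarrow> 'i \<Rightarrow> real"
  assumes "\<And>i j. i \<in> I \<Longrightarrow> j \<in> I \<Longrightarrow> b i j = - b j i"
  shows "(\<Sum>i\<in>I. \<Sum>j\<in>I. b i j * (w j - w i)) = - 2 * (\<Sum>i\<in>I. \<Sum>j\<in>I. b i j * w i)"
proof -
  have "(\<Sum>i\<in>I. \<Sum>j\<in>I. b i j * w j) = (\<Sum>i\<in>I. \<Sum>j\<in>I. - (b i j * w i))"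
    by (subst sum.swap) (intro sum.cong refl, metis assms minus_mult_left)
  also have "\<dots> = - (\<Sum>i\<in>I. \<Sum>j\<in>I. b i j * w i)"
    by (simp only: sum_negf)
  finally have "(\<Sum>i\<in>I. \<Sum>j\<in>I. b i j * w j) = - (\<Sum>i\<in>I. \<Sum>j\<in>I. b i j * w i)" .
  moreover have "(\<Sum>i\<in>I. \<Sum>j\<in>I. b i j * (w j - w i))
      = (\<Sum>i\<in>I. \<Sum>j\<in>I. b i j * w j) - (\<Sum>i\<in>I. \<Sum>j\<in>I. b i j * w i)"
    by (simp only: right_diff_distrib sum_subtractf)
  ultimately show ?thesis
    by simp
qed

lemma nonincreasing_if_has_derivative_nonpos:
  fixes f f' :: "real \<Rightarrow> real"
  assumes "s \<le> u" "{s..u} \<subseteq> S"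
    and "\<And>x. x \<in> {s..u} \<Longrightarrow> (f has_real_derivative f' x) (at x within S) \<and> f' x \<le> 0"
  shows "f u \<le> f s"
proof -
  have "(f has_derivative (\<lambda>h. f' x * h)) (at x within {s..u})" if "s \<le> x" "x \<le> u" for x
    using DERIV_subset[OF conjunct1[OF assms(3)] assms(2)] that
    unfolding has_field_derivative_def by simp
  then obtain x where x: "x \<in> {s..u}" "f u - f s = f' x * (u - s)"
    using mvt_very_simple[OF \<open>s \<le> u\<close>, of f "\<lambda>x h. f' x * h"] by blast
  have "f' x * (u - s) \<le> 0"
    using assms(1,3) x(1) by (intro mult_nonpos_nonneg) auto
  with x(2) show ?thesis
    by simp
qed

lemma propagate_upper_bound:
  fixes f f' :: "real \<Rightarrow> real"
  assumes S: "is_interval S" "a \<in> S" "\<And>t. t \<in> S \<Longrightarrow> a \<le> t"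
    and cont: "continuous_on S f" and start: "f a \<le> c"
    and local: "\<And>t. t \<in> S \<Longrightarrow> f t \<le> c \<Longrightarrow>
      \<forall>\<^sub>F u in nhds t. u \<in> S \<longrightarrow> (f has_real_derivative f' u) (at u within S) \<and> f' u \<le> 0"
    and t: "t \<in> S"
  shows "f t \<le> c"
proof (rule ccontr)
  assume "\<not> f t \<le> c"
  define B where "B = {u \<in> {a..t}. c < f u}"
  define s where "s = Inf B"
  have "t \<in> B"
    using \<open>\<not> f t \<le> c\<close> S(3)[OF t] unfolding B_def by auto
  have bdd: "bdd_below B"
    unfolding B_def by (rule bdd_belowI[of _ a]) auto
  have "s \<le> t"
    unfolding s_def using \<open>t \<in> B\<close> bdd by (rule cInf_lower)
  have "a \<le> s"
    unfolding s_def using \<open>t \<in> B\<close> by (intro cInf_greatest) (auto simp: B_def)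
  have in_S: "{a..t} \<subseteq> S"
    using S(1,2) t unfolding is_interval_1 by (meson atLeastAtMost_iff subsetI)
  have below: "f u \<le> c" if "a \<le> u" "u < s" for u
  proof (rule ccontr)
    assume "\<not> f u \<le> c"
    then have "u \<in> B"
      unfolding B_def using that \<open>s \<le> t\<close> by auto
    then have "s \<le> u"
      unfolding s_def using bdd by (rule cInf_lower)
    with \<open>u < s\<close> show False
      by simp
  qed
  have "f s \<le> c"
  proof (cases "s = a")
    case False
    with \<open>a \<le> s\<close> have "a < s"
      by simp
    have "continuous_on {a..s} f"
      using cont by (rule continuous_on_subset) (use in_S \<open>s \<le> t\<close> in auto)
    then have "(f \<longlongrightarrow> f s) (at_left s)"
      using \<open>a < s\<close> by (simp add: continuous_on_Icc_at_leftD)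
    moreover have "\<forall>\<^sub>F u in at_left s. f u \<le> c"
      using eventually_at_left_real[OF \<open>a < s\<close>] by eventually_elim (auto intro: below)
    ultimately show ?thesis
      by (rule tendsto_upperbound) simp
  qed (use start in simp)
  with \<open>\<not> f t \<le> c\<close> have "s < t"
    using \<open>s \<le> t\<close> by (cases "s = t") auto
  have "s \<in> S"
    using in_S \<open>a \<le> s\<close> \<open>s \<le> t\<close> by auto
  obtain d where "d > 0" and d: "\<And>u. dist u s < d \<Longrightarrow> u \<in> S \<Longrightarrow>
      (f has_real_derivative f' u) (at u within S) \<and> f' u \<le> 0"
    using local[OF \<open>s \<in> S\<close> \<open>f s \<le> c\<close>] unfolding eventually_nhds_metric by blast
  define e where "e = min (s + d / 2) t"
  have "s < e"
    unfolding e_def using \<open>d > 0\<close> \<open>s < t\<close> by simp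
  \<comment> \<open>\<open>f\<close> does not increase on \<open>[s, e]\<close>, so no point of \<open>B\<close> lies below \<open>e\<close>.\<close>
  have "e \<le> s"
    unfolding s_def
  proof (rule cInf_greatest)
    show "B \<noteq> {}"
      using \<open>t \<in> B\<close> by auto
  next
    fix b assume "b \<in> B"
    show "e \<le> b"
    proof (rule ccontr)
      assume "\<not> e \<le> b"
      have "s \<le> b"
        unfolding s_def using \<open>b \<in> B\<close> bdd by (rule cInf_lower)
      have "{s..b} \<subseteq> S"
        using \<open>a \<le> s\<close> \<open>\<not> e \<le> b\<close> unfolding e_def by (intro order.trans[OF _ in_S]) auto
      moreover have "dist x s < d" if "x \<in> {s..b}" for x
        using that \<open>\<not> e \<le> b\<close> \<open>d > 0\<close> unfolding e_def dist_real_def by auto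
      ultimately have "f b \<le> f s"
        using d by (intro nonincreasing_if_has_derivative_nonpos[where f' = f', OF \<open>s \<le> b\<close>]) auto
      with \<open>f s \<le> c\<close> \<open>b \<in> B\<close> show False
        unfolding B_def by simp
    qed
  qed
  with \<open>s < e\<close> show False
    by simp
qed

lemma not_tendsto_zero_if_eventually_abs_ge:
  fixes g :: "'a \<Rightarrow> real"
  assumes "F \<noteq> bot" "0 < \<delta>" "\<forall>\<^sub>F t in F. \<delta> \<le> \<bar>g t\<bar>"
  shows "\<not> (g \<longlongrightarrow> 0) F"
proof
  assume "(g \<longlongrightarrow> 0) F"
  then have "((\<lambda>t. \<bar>g t\<bar>) \<longlongrightarrow> 0) F"
    using tendsto_rabs by fastforce
  from tendsto_lowerbound[OF this assms(3,1)] assms(2) show False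
    by simp
qed

lemma not_tendsto_zero_at_horizon:
  fixes g :: "real \<Rightarrow> real" and \<tau> :: ereal
  assumes "0 < \<tau>" "0 < \<delta>" and bound: "\<And>t. 0 \<le> t \<Longrightarrow> ereal t < \<tau> \<Longrightarrow> \<delta> \<le> \<bar>g t\<bar>"
  shows "(\<tau> = \<infinity> \<longrightarrow> \<not> (g \<longlongrightarrow> 0) at_top)
       \<and> (\<tau> \<noteq> \<infinity> \<longrightarrow> \<not> (g \<longlongrightarrow> 0) (at_left (real_of_ereal \<tau>)))"
proof (intro conjI impI)
  assume "\<tau> = \<infinity>"
  have "\<forall>\<^sub>F t in at_top. \<delta> \<le> \<bar>g t\<bar>"
    using eventually_ge_at_top[of 0] by eventually_elim (simp add: bound \<open>\<tau> = \<infinity>\<close>)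
  then show "\<not> (g \<longlongrightarrow> 0) at_top"
    using \<open>0 < \<delta>\<close> by (intro not_tendsto_zero_if_eventually_abs_ge) auto
next
  assume "\<tau> \<noteq> \<infinity>"
  then obtain T where T: "\<tau> = ereal T" "0 < T"
    using \<open>0 < \<tau>\<close> by (cases \<tau>) auto
  have "\<forall>\<^sub>F t in at_left T. \<delta> \<le> \<bar>g t\<bar>"
    using eventually_at_left_real[OF \<open>0 < T\<close>] by eventually_elim (simp add: bound T)
  then show "\<not> (g \<longlongrightarrow> 0) (at_left (real_of_ereal \<tau>))"
    using \<open>0 < \<delta>\<close> T by (intro not_tendsto_zero_if_eventually_abs_ge) auto
qed

lemma kur_energy_pair_deviation:
  assumes N: "N > 0" and k2: "k2 > 0"
    and symm: "\<And>i j. i \<in> {1..N} \<Longrightarrow> j \<in> {1..N} \<Longrightarrow> thinf i j = thinf j i"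
    and ij: "i \<in> {1..N}" "j \<in> {1..N}" "i \<noteq> j"
  shows "\<bar>\<bar>Th j - Th i\<bar> - thinf i j\<bar> \<le> sqrt (2 * real N * kur_energy N k2 thinf Th W / k2)"
proof -
  define f where "f a b = (\<bar>Th b - Th a\<bar> - thinf a b)\<^sup>2" for a b
  have f_nonneg: "0 \<le> f a b" for a b
    unfolding f_def by simp
  have "f i j + f j i \<le> (\<Sum>b\<in>{1..N}. f i b) + (\<Sum>b\<in>{1..N}. f j b)"
    using ij f_nonneg by (intro add_mono member_le_sum) auto
  also have "\<dots> = (\<Sum>a\<in>{i, j}. \<Sum>b\<in>{1..N}. f a b)"
    using ij by simp
  also have "\<dots> \<le> (\<Sum>a\<in>{1..N}. \<Sum>b\<in>{1..N}. f a b)"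
    using ij f_nonneg by (intro sum_mono2) (auto intro: sum_nonneg)
  finally have "2 * f i j \<le> (\<Sum>a\<in>{1..N}. \<Sum>b\<in>{1..N}. f a b)"
    using symm[OF ij(1,2)] by (simp add: f_def abs_minus_commute)
  then have "k2 / (2 * real N) * f i j \<le> k2 / (4 * real N) * (\<Sum>a\<in>{1..N}. \<Sum>b\<in>{1..N}. f a b)"
    using N k2 by (simp add: field_simps)
  also have "\<dots> \<le> kur_energy N k2 thinf Th W"
    unfolding kur_energy_def f_def by (simp add: sum_nonneg)
  finally have "f i j \<le> 2 * real N * kur_energy N k2 thinf Th W / k2"
    using N k2 by (simp add: field_simps)
  then show ?thesis
    using real_sqrt_le_mono unfolding f_def by fastforce
qed

lemma finite_off_diagonal_values:
  fixes thinf :: "nat \<Rightarrow> nat \<Rightarrow> real"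
  shows "finite {thinf i j | i j. i \<in> {1..N} \<and> j \<in> {1..N} \<and> i \<noteq> j}"
proof -
  have "{thinf i j | i j. i \<in> {1..N} \<and> j \<in> {1..N} \<and> i \<noteq> j}
          \<subseteq> case_prod thinf ` ({1..N} \<times> {1..N})"
    by auto
  then show ?thesis
    by (rule finite_subset) simp
qed

lemma kur_min_thinf_le:
  assumes "i \<in> {1..N}" "j \<in> {1..N}" "i \<noteq> j"
  shows "kur_min_thinf N thinf \<le> thinf i j"
  unfolding kur_min_thinf_def using assms by (intro Min_le finite_off_diagonal_values) auto

lemma le_kur_U:
  assumes "i \<in> {1..N}" "j \<in> {1..N}" "i \<noteq> j"
  shows "thinf i j + sqrt (2 * real N * E0 / k2) \<le> kur_U N k2 thinf E0"
  unfolding kur_U_def using assms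
  by (intro add_right_mono Max_ge[OF finite_off_diagonal_values]) blast

lemma kur_min_thinf_attained:
  assumes "N \<ge> 2"
  obtains i j where "i \<in> {1..N}" "j \<in> {1..N}" "i \<noteq> j" "thinf i j = kur_min_thinf N thinf"
proof -
  have "thinf 1 2 \<in> {thinf i j | i j. i \<in> {1..N} \<and> j \<in> {1..N} \<and> i \<noteq> j}"
    using assms by force
  then have "kur_min_thinf N thinf \<in> {thinf i j | i j. i \<in> {1..N} \<and> j \<in> {1..N} \<and> i \<noteq> j}"
    unfolding kur_min_thinf_def by (intro Min_in finite_off_diagonal_values) auto
  then show ?thesis
    using that by auto
qed

lemma sqrt_kur_energy_less_kur_min_thinf:
  assumes N: "N \<ge> 2" and k2: "k2 > 0"
    and symm: "\<And>i j. i \<in> {1..N} \<Longrightarrow> j \<in> {1..N} \<Longrightarrow> thinf i j = thinf j i"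
    and small: "kur_energy N k2 thinf Th W < k2 * (kur_min_thinf N thinf)\<^sup>2 / (2 * real N)"
  shows "sqrt (2 * real N * kur_energy N k2 thinf Th W / k2) < kur_min_thinf N thinf"
proof -
  define m where "m = kur_min_thinf N thinf"
  define r where "r = sqrt (2 * real N * kur_energy N k2 thinf Th W / k2)"
  have "r < sqrt (m\<^sup>2)"
    unfolding r_def using N k2 small by (intro real_sqrt_less_mono) (simp add: field_simps m_def)
  then have r_less: "r < \<bar>m\<bar>"
    by simp
  obtain i j where ij: "i \<in> {1..N}" "j \<in> {1..N}" "i \<noteq> j" "thinf i j = m"
    using kur_min_thinf_attained[OF N] unfolding m_def by metis
  \<comment> \<open>The smallness hypothesis alone gives only \<open>r < \<bar>m\<bar>\<close>; the minimising pair forces \<open>m > 0\<close>.\<close>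
  have "\<bar>\<bar>Th j - Th i\<bar> - m\<bar> \<le> r"
    using kur_energy_pair_deviation[of N k2 thinf i j Th W, OF _ k2 symm ij(1-3)] N ij(4)
    unfolding r_def by simp
  with r_less show ?thesis
    unfolding m_def[symmetric] r_def[symmetric] by linarith
qed

locale kuramoto_solution =
  fixes N :: nat and k0 k1 k2 :: real and thinf :: "nat \<Rightarrow> nat \<Rightarrow> real"
    and th om :: "nat \<Rightarrow> real \<Rightarrow> real" and S :: "real set"
  assumes thinf_sym: "\<And>i j. i \<in> {1..N} \<Longrightarrow> j \<in> {1..N} \<Longrightarrow> thinf i j = thinf j i"
    and th_deriv: "\<And>i t. i \<in> {1..N} \<Longrightarrow> t \<in> S \<Longrightarrow>
      (th i has_real_derivative om i t) (at t within S)"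
    and om_deriv: "\<And>i t. i \<in> {1..N} \<Longrightarrow> t \<in> S \<Longrightarrow>
      (om i has_real_derivative kur_rhs N k0 k1 k2 thinf (\<lambda>j. th j t) (\<lambda>j. om j t) i)
        (at t within S)"
begin

definition energy :: "real \<Rightarrow> real" where
  "energy t = kur_energy N k2 thinf (\<lambda>j. th j t) (\<lambda>j. om j t)"

definition dissipation :: "real \<Rightarrow> real" where
  "dissipation t = (\<Sum>i\<in>{1..N}. \<Sum>j\<in>{1..N}.
      (k0 * cos (th j t - th i t) + k1) * (om j t - om i t)\<^sup>2) / (2 * real N)"

lemma dissipation_nonneg:
  assumes "\<And>i j. i \<in> {1..N} \<Longrightarrow> j \<in> {1..N} \<Longrightarrow> i \<noteq> j \<Longrightarrow> 0 \<le> k0 * cos (th j t - th i t) + k1"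
  shows "0 \<le> dissipation t"
  unfolding dissipation_def
proof (intro divide_nonneg_nonneg sum_nonneg)
  fix i j assume "i \<in> {1..N}" "j \<in> {1..N}"
  then show "0 \<le> (k0 * cos (th j t - th i t) + k1) * (om j t - om i t)\<^sup>2"
    using assms by (cases "i = j") auto
qed simp

lemma energy_has_derivative:
  assumes t: "t \<in> S"
    and no_collision: "\<And>i j. i \<in> {1..N} \<Longrightarrow> j \<in> {1..N} \<Longrightarrow> i \<noteq> j \<Longrightarrow> th i t \<noteq> th j t"
  shows "(energy has_real_derivative - dissipation t) (at t within S)"
proof -
  define a where "a i j = k0 * cos (th j t - th i t) + k1" for i j
  define b where "b i j = (\<bar>th j t - th i t\<bar> - thinf i j) * sgn (th j t - th i t)" for i j
  define w where "w i = om i t" for i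
  have rhs: "kur_rhs N k0 k1 k2 thinf (\<lambda>j. th j t) w i
      = (\<Sum>j\<in>{1..N}. a i j * (w j - w i)) / real N + k2 * (\<Sum>j\<in>{1..N}. b i j) / real N" for i
    unfolding kur_rhs_def a_def b_def by simp
  have b_antisym: "b i j = - b j i" if "i \<in> {1..N}" "j \<in> {1..N}" for i j
    using thinf_sym[OF that] sgn_minus[of "th j t - th i t"]
    unfolding b_def by (simp add: abs_minus_commute)
  have kinetic: "((\<lambda>s. (om i s)\<^sup>2) has_real_derivative
      2 * w i * kur_rhs N k0 k1 k2 thinf (\<lambda>j. th j t) w i) (at t within S)" if "i \<in> {1..N}" for i
    using DERIV_power[OF om_deriv[OF that t], of 2] unfolding w_def by (simp add: mult_ac)
  have bond: "((\<lambda>s. (\<bar>th j s - th i s\<bar> - thinf i j)\<^sup>2) has_real_derivative 2 * b i j * (w j - w i))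
      (at t within S)" if "i \<in> {1..N}" "j \<in> {1..N}" for i j
  proof (cases "i = j")
    case False
    have "((\<lambda>s. th j s - th i s) has_real_derivative w j - w i) (at t within S)"
      unfolding w_def using th_deriv[OF that(2) t] th_deriv[OF that(1) t] by (rule DERIV_diff)
    moreover have "th j t - th i t \<noteq> 0"
      using no_collision[OF that False] by simp
    ultimately show ?thesis
      using has_real_derivative_abs_minus_power2[of "\<lambda>s. th j s - th i s"] unfolding b_def
      by (simp only: mult.assoc)
  qed (simp add: b_def)
  have "(energy has_real_derivative
      1/2 * (\<Sum>i\<in>{1..N}. 2 * w i * kur_rhs N k0 k1 k2 thinf (\<lambda>j. th j t) w i)
      + k2 / (4 * real N) * (\<Sum>i\<in>{1..N}. \<Sum>j\<in>{1..N}. 2 * b i j * (w j - w i))) (at t within S)"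
    unfolding energy_def[abs_def] kur_energy_def
    by (intro DERIV_add DERIV_cmult DERIV_sum kinetic bond)
  moreover have "1/2 * (\<Sum>i\<in>{1..N}. 2 * w i * kur_rhs N k0 k1 k2 thinf (\<lambda>j. th j t) w i)
      = (\<Sum>i\<in>{1..N}. \<Sum>j\<in>{1..N}. a i j * (w j - w i) * w i) / real N
        + k2 * (\<Sum>i\<in>{1..N}. \<Sum>j\<in>{1..N}. b i j * w i) / real N"
    by (simp add: rhs sum_distrib_left sum_distrib_right sum_divide_distrib sum.distrib
        algebra_simps)
  moreover have "(\<Sum>i\<in>{1..N}. \<Sum>j\<in>{1..N}. a i j * (w j - w i) * w i)
      = - (\<Sum>i\<in>{1..N}. \<Sum>j\<in>{1..N}. a i j * (w j - w i)\<^sup>2) / 2"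
    by (rule sum_sum_symmetric_weighted_diff) (simp add: a_def cos_diff mult.commute)
  moreover have "(\<Sum>i\<in>{1..N}. \<Sum>j\<in>{1..N}. 2 * b i j * (w j - w i))
      = 2 * (\<Sum>i\<in>{1..N}. \<Sum>j\<in>{1..N}. b i j * (w j - w i))"
    by (simp add: sum_distrib_left mult.assoc)
  moreover have "(\<Sum>i\<in>{1..N}. \<Sum>j\<in>{1..N}. b i j * (w j - w i))
      = - 2 * (\<Sum>i\<in>{1..N}. \<Sum>j\<in>{1..N}. b i j * w i)"
    by (rule sum_sum_antisymmetric_weighted_diff[OF b_antisym])
  ultimately show ?thesis
    unfolding dissipation_def a_def w_def by (simp add: field_simps)
qed

lemma continuous_on_th: "i \<in> {1..N} \<Longrightarrow> continuous_on S (th i)"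
  using th_deriv DERIV_continuous unfolding continuous_on_eq_continuous_within by blast

lemma continuous_on_energy: "continuous_on S energy"
proof -
  have "continuous_on S (om i)" if "i \<in> {1..N}" for i
    using om_deriv[OF that] DERIV_continuous unfolding continuous_on_eq_continuous_within by blast
  then show ?thesis
    unfolding energy_def[abs_def] kur_energy_def by (intro continuous_intros continuous_on_th) auto
qed

lemma phase_deviation_le:
  assumes N: "N > 0" and k2: "k2 > 0" and E: "energy t \<le> E"
    and ij: "i \<in> {1..N}" "j \<in> {1..N}" "i \<noteq> j"
  shows "\<bar>\<bar>th j t - th i t\<bar> - thinf i j\<bar> \<le> sqrt (2 * real N * E / k2)"
proof -
  have "\<bar>\<bar>th j t - th i t\<bar> - thinf i j\<bar> \<le> sqrt (2 * real N * energy t / k2)"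
    unfolding energy_def by (rule kur_energy_pair_deviation[OF N k2 thinf_sym ij])
  also have "\<dots> \<le> sqrt (2 * real N * E / k2)"
    using E N k2 by (simp add: divide_right_mono)
  finally show ?thesis .
qed

lemma eventually_phase_differences_in:
  assumes "open A" "t \<in> S"
    and "\<And>i j. i \<in> {1..N} \<Longrightarrow> j \<in> {1..N} \<Longrightarrow> i \<noteq> j \<Longrightarrow> th j t - th i t \<in> A"
  shows "\<forall>\<^sub>F u in nhds t. u \<in> S \<longrightarrow> (\<forall>i\<in>{1..N}. \<forall>j\<in>{1..N}. i \<noteq> j \<longrightarrow> th j u - th i u \<in> A)"
proof -
  have "\<forall>\<^sub>F u in at t within S. th j u - th i u \<in> A"
    if "i \<in> {1..N}" "j \<in> {1..N}" "i \<noteq> j" for i j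
  proof (rule topological_tendstoD[OF _ \<open>open A\<close> assms(3)[OF that]])
    show "((\<lambda>u. th j u - th i u) \<longlongrightarrow> th j t - th i t) (at t within S)"
      using continuous_on_th[OF that(1)] continuous_on_th[OF that(2)] \<open>t \<in> S\<close>
      by (intro tendsto_diff) (auto simp: continuous_on_def)
  qed
  then have "\<forall>\<^sub>F u in at t within S. \<forall>i\<in>{1..N}. \<forall>j\<in>{1..N}. i \<noteq> j \<longrightarrow> th j u - th i u \<in> A"
    by (auto intro!: eventually_ball_finite)
  then show ?thesis
    unfolding eventually_at_filter by (rule eventually_mono) (use assms(3) in auto)
qed

definition admissible :: "real \<Rightarrow> bool" where
  "admissible t \<longleftrightarrow> (\<forall>i\<in>{1..N}. \<forall>j\<in>{1..N}. i \<noteq> j \<longrightarrow>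
      th j t \<noteq> th i t \<and> 0 < k0 * cos (th j t - th i t) + k1)"

lemma energy_dissipative:
  assumes "t \<in> S" "admissible t"
  shows "(energy has_real_derivative - dissipation t) (at t within S) \<and> - dissipation t \<le> 0"
proof
  show "(energy has_real_derivative - dissipation t) (at t within S)"
    using assms unfolding admissible_def by (intro energy_has_derivative) auto
  have "0 \<le> dissipation t"
    using assms(2) unfolding admissible_def by (intro dissipation_nonneg) (simp add: less_imp_le)
  then show "- dissipation t \<le> 0"
    by simp
qed

lemma eventually_admissible:
  assumes "t \<in> S" "admissible t"
  shows "\<forall>\<^sub>F u in nhds t. u \<in> S \<longrightarrow> admissible u"
proof -
  define A where "A = {x. x \<noteq> 0 \<and> 0 < k0 * cos x + k1}"
  have "open A"
    unfolding A_def
    by (intro open_Collect_conj open_Collect_neq open_Collect_less continuous_intros)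
  from eventually_phase_differences_in[OF this \<open>t \<in> S\<close>] assms(2)
  have "\<forall>\<^sub>F u in nhds t. u \<in> S \<longrightarrow>
      (\<forall>i\<in>{1..N}. \<forall>j\<in>{1..N}. i \<noteq> j \<longrightarrow> th j u - th i u \<in> A)"
    unfolding admissible_def A_def by simp
  then show ?thesis
    by (rule eventually_mono) (simp add: admissible_def A_def)
qed

lemma energy_le_initial:
  assumes S: "is_interval S" "0 \<in> S" "\<And>t. t \<in> S \<Longrightarrow> 0 \<le> t"
    and N: "N > 0" and k0: "k0 \<ge> 0" and k2: "k2 > 0"
    and gap_lower: "\<And>i j. i \<in> {1..N} \<Longrightarrow> j \<in> {1..N} \<Longrightarrow> i \<noteq> j \<Longrightarrow>
      sqrt (2 * real N * energy 0 / k2) < thinf i j"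
    and gap_upper: "\<And>i j. i \<in> {1..N} \<Longrightarrow> j \<in> {1..N} \<Longrightarrow> i \<noteq> j \<Longrightarrow>
      thinf i j + sqrt (2 * real N * energy 0 / k2) \<le> U"
    and U: "U < pi" and coupling: "0 < k0 * cos U + k1"
    and t: "t \<in> S"
  shows "energy t \<le> energy 0"
proof (rule propagate_upper_bound[OF S continuous_on_energy order.refl _ t])
  fix u assume "u \<in> S" "energy u \<le> energy 0"
  have "admissible u"
    unfolding admissible_def
  proof (intro ballI impI)
    fix i j assume ij: "i \<in> {1..N}" "j \<in> {1..N}" "i \<noteq> j"
    have "\<bar>\<bar>th j u - th i u\<bar> - thinf i j\<bar> \<le> sqrt (2 * real N * energy 0 / k2)"
      by (rule phase_deviation_le[OF N k2 \<open>energy u \<le> energy 0\<close> ij])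
    then have "0 < \<bar>th j u - th i u\<bar>" "\<bar>th j u - th i u\<bar> \<le> U"
      using gap_lower[OF ij] gap_upper[OF ij] by linarith+
    then have "cos U \<le> cos (th j u - th i u)"
      using cos_monotone_0_pi_le[of "\<bar>th j u - th i u\<bar>" U] U by simp
    then have "k0 * cos U \<le> k0 * cos (th j u - th i u)"
      using k0 by (rule mult_left_mono)
    with \<open>0 < \<bar>th j u - th i u\<bar>\<close> coupling
    show "th j u \<noteq> th i u \<and> 0 < k0 * cos (th j u - th i u) + k1"
      by auto
  qed
  with \<open>u \<in> S\<close> show "\<forall>\<^sub>F v in nhds u. v \<in> S \<longrightarrow>
      (energy has_real_derivative - dissipation v) (at v within S) \<and> - dissipation v \<le> 0"
    by (rule eventually_mono[OF eventually_admissible]) (use energy_dissipative in blast)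
qed

lemma phase_gap_ge:
  assumes S: "is_interval S" "0 \<in> S" "\<And>t. t \<in> S \<Longrightarrow> 0 \<le> t"
    and N: "N > 0" and k0: "k0 \<ge> 0" and k2: "k2 > 0"
    and small: "sqrt (2 * real N * energy 0 / k2) < kur_min_thinf N thinf"
    and U: "kur_U N k2 thinf (energy 0) < pi"
    and coupling: "0 < k0 * cos (kur_U N k2 thinf (energy 0)) + k1"
    and t: "t \<in> S" and ij: "i \<in> {1..N}" "j \<in> {1..N}" "i \<noteq> j"
  shows "kur_min_thinf N thinf - sqrt (2 * real N * energy 0 / k2) \<le> \<bar>th j t - th i t\<bar>"
proof -
  have "energy t \<le> energy 0"
  proof (rule energy_le_initial[OF S N k0 k2 _ le_kur_U U coupling t])
    show "sqrt (2 * real N * energy 0 / k2) < thinf i j"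
      if "i \<in> {1..N}" "j \<in> {1..N}" "i \<noteq> j" for i j
      using small kur_min_thinf_le[where thinf = thinf, OF that] by simp
  qed
  from phase_deviation_le[OF N k2 this ij]
  show ?thesis
    using kur_min_thinf_le[where thinf = thinf, OF ij] by (simp add: abs_le_iff)
qed

end

theorem theorem3p1:
  fixes N :: nat and k0 k1 k2 :: real and thinf :: "nat \<Rightarrow> nat \<Rightarrow> real"
    and th om :: "nat \<Rightarrow> real \<Rightarrow> real" and \<tau> :: ereal
  assumes N2: "N \<ge> 2"
    and k0: "k0 \<ge> 0" and k1: "k1 \<ge> 0" and k2: "k2 > 0"
    and diag: "\<And>i. i \<in> {1..N} \<Longrightarrow> thinf i i = 0"
    and symm: "\<And>i j. i \<in> {1..N} \<Longrightarrow> j \<in> {1..N} \<Longrightarrow> thinf i j = thinf j i"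
    and tau: "\<tau> > 0"
    and ode_th: "\<And>i t. i \<in> {1..N} \<Longrightarrow> 0 \<le> t \<Longrightarrow> ereal t < \<tau> \<Longrightarrow>
        ((th i) has_real_derivative (om i t)) (at t within {s. 0 \<le> s \<and> ereal s < \<tau>})"
    and ode_om: "\<And>i t. i \<in> {1..N} \<Longrightarrow> 0 \<le> t \<Longrightarrow> ereal t < \<tau> \<Longrightarrow>
        ((om i) has_real_derivative
           (kur_rhs N k0 k1 k2 thinf (\<lambda>j. th j t) (\<lambda>j. om j t) i))
          (at t within {s. 0 \<le> s \<and> ereal s < \<tau>})"
    and inS: "kur_S N (kur_U N k2 thinf (kur_energy N k2 thinf (\<lambda>j. th j 0) (\<lambda>j. om j 0)))
                 (\<lambda>j. th j 0)"
    and E0: "kur_energy N k2 thinf (\<lambda>j. th j 0) (\<lambda>j. om j 0)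
               < k2 * (kur_min_thinf N thinf)^2 / (2 * real N)"
    and coupling: "k0 * cos (kur_U N k2 thinf (kur_energy N k2 thinf (\<lambda>j. th j 0) (\<lambda>j. om j 0)))
                     + k1 > 0"
  shows "(\<forall>i\<in>{1..N}. \<forall>j\<in>{1..N}. i \<noteq> j \<longrightarrow>
            (\<forall>t. 0 \<le> t \<and> ereal t < \<tau> \<longrightarrow> th i t \<noteq> th j t))
       \<and> (\<forall>i\<in>{1..N}. \<forall>j\<in>{1..N}. i \<noteq> j \<longrightarrow>
            (\<tau> = \<infinity> \<longrightarrow> \<not> ((\<lambda>t. th i t - th j t) \<longlongrightarrow> 0) at_top)
          \<and> (\<tau> \<noteq> \<infinity> \<longrightarrow> \<not> ((\<lambda>t. th i t - th j t) \<longlongrightarrow> 0) (at_left (real_of_ereal \<tau>))))"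
proof -
  define S where "S = {s. 0 \<le> s \<and> ereal s < \<tau>}"
  interpret kuramoto_solution N k0 k1 k2 thinf th om S
    using symm ode_th ode_om unfolding S_def by unfold_locales auto
  have N: "N > 0"
    using N2 by simp
  have small: "sqrt (2 * real N * energy 0 / k2) < kur_min_thinf N thinf"
    using sqrt_kur_energy_less_kur_min_thinf[OF N2 k2 symm E0] unfolding energy_def .
  have U: "kur_U N k2 thinf (energy 0) < pi"
    and U_coupling: "0 < k0 * cos (kur_U N k2 thinf (energy 0)) + k1"
    using inS coupling unfolding kur_S_def energy_def by simp_all
  have "is_interval S"
    unfolding S_def is_interval_1 by (auto intro: order.strict_trans1[rotated])
  have "0 \<in> S"
    using tau unfolding S_def by (simp add: zero_ereal_def)
  define \<delta> where "\<delta> = kur_min_thinf N thinf - sqrt (2 * real N * energy 0 / k2)"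
  have gap: "\<delta> \<le> \<bar>th i t - th j t\<bar>"
    if "i \<in> {1..N}" "j \<in> {1..N}" "i \<noteq> j" "0 \<le> t" "ereal t < \<tau>" for i j t
    using phase_gap_ge[OF \<open>is_interval S\<close> \<open>0 \<in> S\<close> _ N k0 k2 small U U_coupling _ that(1-3)]
      that(4,5)
    unfolding \<delta>_def S_def by (simp add: abs_minus_commute)
  moreover have "0 < \<delta>"
    using small unfolding \<delta>_def by simp
  ultimately show ?thesis
    using not_tendsto_zero_at_horizon[OF tau \<open>0 < \<delta>\<close>] by fastforce
qed

end
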